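(* Let $n_A,n_B\ge1$, $\Delta\ge 0$, and let $H\in\mathbb{C}^{(n_An_B)\times(n_An_B)}$ be a Hermitian matrix (the announced payoff Hamiltonian, on $\mathbb{C}^{n_A}\otimes\mathbb{C}^{n_B}$). Let $$\Phi(H)=\operatorname*{arg\,max}_{\rho_B\in\mathcal{P}_B}\ \min_{\rho_A\in\mathcal{P}_A}\operatorname{tr}\big((\rho_A\otimes\rho_B)H\big)$$ be the set of security strategies of the maximizing player $B$ (the "naive victim") in the zero-sum game with payoff $\operatorname{tr}((\rho_A\otimes\rho_B)H)$, and let $$\Phi_r(H)=\operatorname*{arg\,max}_{\rho_B\in\mathcal{P}_B}\ \min_{\rho_A\in\mathcal{P}_A,\ D\in\mathcal{D}}\operatorname{tr}\big((\rho_A\otimes\rho_B)(H-D)\big)$$ be the set of strategies of a "robust victim" who optimizes the worst-case outcome over all true Hamiltonians $H-D$ consistent with the announced $H$ and the deception budget. Then $\Phi(H)=\Phi_r(H)$.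
   Context: $\mathcal{P}_A$ (resp. $\mathcal{P}_B$) is the set of $n_A\times n_A$ (resp. $n_B\times n_B$) complex density matrices, i.e. positive semidefinite matrices of trace one. The deception set is $\mathcal{D}=\{D\in\mathbb{C}^{(n_An_B)\times(n_An_B)}: D=D^\dagger,\ \|D\|_1\le\Delta\}$, where $\|A\|_1=\sup_{\|x\|_1=1}\|Ax\|_1$ is the matrix norm induced by the vector $1$-norm. Player $A$ (the deceiver) is the minimizer and player $B$ (the victim) the maximizer. *)

theory Defs
  imports Complex_Main "Jordan_Normal_Form.Matrix"
begin

definition hermitian_mat :: "complex mat \<Rightarrow> bool" where
  "hermitian_mat A \<longleftrightarrow> dim_row A = dim_col A \<and>
     (\<forall>i < dim_row A. \<forall>j < dim_row A. A $$ (i, j) = cnj (A $$ (j, i)))"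

definition psd_mat :: "complex mat \<Rightarrow> bool" where
  "psd_mat A \<longleftrightarrow> dim_row A = dim_col A \<and>
     (\<forall>x \<in> carrier_vec (dim_row A).
        let q = (\<Sum>i<dim_row A. cnj (x $ i) * (A *\<^sub>v x) $ i) in Im q = 0 \<and> Re q \<ge> 0)"

definition mtrace :: "complex mat \<Rightarrow> complex" where
  "mtrace A = (\<Sum>i<dim_row A. A $$ (i, i))"

definition density_mats :: "nat \<Rightarrow> complex mat set" where
  "density_mats n = {\<rho>. \<rho> \<in> carrier_mat n n \<and> psd_mat \<rho> \<and> mtrace \<rho> = 1}"

text \<open>Kronecker product, with the standard index convention (i_A n_B + i_B).\<close>
definition kron :: "complex mat \<Rightarrow> complex mat \<Rightarrow> complex mat" where
  "kron A B = mat (dim_row A * dim_row B) (dim_col A * dim_col B)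
     (\<lambda>(i, j). A $$ (i div dim_row B, j div dim_col B) * B $$ (i mod dim_row B, j mod dim_col B))"

definition vec_norm1 :: "complex vec \<Rightarrow> real" where
  "vec_norm1 x = (\<Sum>i<dim_vec x. cmod (x $ i))"

definition induced_norm1 :: "complex mat \<Rightarrow> real" where
  "induced_norm1 D = Sup {vec_norm1 (D *\<^sub>v x) | x. x \<in> carrier_vec (dim_col D) \<and> vec_norm1 x = 1}"

definition deception_set :: "nat \<Rightarrow> real \<Rightarrow> complex mat set" where
  "deception_set n \<Delta> = {D. D \<in> carrier_mat n n \<and> hermitian_mat D \<and> induced_norm1 D \<le> \<Delta>}"

text \<open>Payoff tr((rho_A (x) rho_B) M); it is real for Hermitian M, we take the real part.\<close>
definition payoff :: "complex mat \<Rightarrow> complex mat \<Rightarrow> complex mat \<Rightarrow> real" where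
  "payoff \<rho>A \<rho>B M = Re (mtrace (kron \<rho>A \<rho>B * M))"

definition naive_value :: "nat \<Rightarrow> complex mat \<Rightarrow> complex mat \<Rightarrow> real" where
  "naive_value nA H \<rho>B = Inf {payoff \<rho>A \<rho>B H | \<rho>A. \<rho>A \<in> density_mats nA}"

definition robust_value :: "nat \<Rightarrow> nat \<Rightarrow> real \<Rightarrow> complex mat \<Rightarrow> complex mat \<Rightarrow> real" where
  "robust_value nA nB \<Delta> H \<rho>B =
     Inf {payoff \<rho>A \<rho>B (H - D) | \<rho>A D. \<rho>A \<in> density_mats nA \<and> D \<in> deception_set (nA * nB) \<Delta>}"

definition Phi :: "nat \<Rightarrow> nat \<Rightarrow> complex mat \<Rightarrow> complex mat set" where
  "Phi nA nB H = {\<rho>B \<in> density_mats nB.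
      \<forall>\<sigma> \<in> density_mats nB. naive_value nA H \<sigma> \<le> naive_value nA H \<rho>B}"

definition Phi_r :: "nat \<Rightarrow> nat \<Rightarrow> real \<Rightarrow> complex mat \<Rightarrow> complex mat set" where
  "Phi_r nA nB \<Delta> H = {\<rho>B \<in> density_mats nB.
      \<forall>\<sigma> \<in> density_mats nB. robust_value nA nB \<Delta> H \<sigma> \<le> robust_value nA nB \<Delta> H \<rho>B}"

end

theory Submission
  imports Defs
begin

text \<open>
  For a product state \<open>K = \<rho>\<^sub>A \<otimes> \<rho>\<^sub>B\<close> the diagonal of \<open>K\<close> is a probability vector and
  \<open>\<bar>K\<^sub>i\<^sub>j\<bar>\<^sup>2 \<le> K\<^sub>i\<^sub>i K\<^sub>j\<^sub>j\<close>, hence \<open>\<bar>K\<^sub>i\<^sub>j\<bar> \<le> (K\<^sub>i\<^sub>i + K\<^sub>j\<^sub>j) / 2\<close>. For a Hermitian \<open>D\<close> the induced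
  1-norm bounds every column sum and therefore also every row sum of \<open>\<bar>D\<^sub>i\<^sub>j\<bar>\<close>, which gives
  \<open>tr (K D) \<le> \<Delta>\<close> on the deception set, with equality for \<open>D = \<Delta> I\<close>. So the robust value of
  every strategy \<open>\<rho>\<^sub>B\<close> is its naive value minus the constant \<open>\<Delta>\<close>, and both have the same
  maximisers.
\<close>

lemma index_mult_mat_vec_sum:
  assumes "A \<in> carrier_mat m n" "x \<in> carrier_vec n" "i < m"
  shows "(A *\<^sub>v x) $ i = (\<Sum>j<n. A $$ (i,j) * x $ j)"
  using assms by (auto simp: scalar_prod_def atLeast0LessThan)

lemma mtrace_mult:
  assumes "K \<in> carrier_mat n n" "M \<in> carrier_mat n n"
  shows "mtrace (K * M) = (\<Sum>i<n. \<Sum>j<n. K $$ (i,j) * M $$ (j,i))"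
  unfolding mtrace_def using assms by (auto simp: scalar_prod_def atLeast0LessThan intro!: sum.cong)

lemma mtrace_mult_minus:
  assumes "K \<in> carrier_mat n n" "H \<in> carrier_mat n n" "D \<in> carrier_mat n n"
  shows "mtrace (K * (H - D)) = mtrace (K * H) - mtrace (K * D)"
  using assms by (simp add: mult_minus_distrib_mat mtrace_def sum_subtractf)

lemma mtrace_mult_smult_one:
  assumes "K \<in> carrier_mat n n"
  shows "mtrace (K * (c \<cdot>\<^sub>m 1\<^sub>m n)) = c * mtrace K"
proof -
  have "K * (c \<cdot>\<^sub>m 1\<^sub>m n) = c \<cdot>\<^sub>m K"
    using assms by (simp add: mult_smult_distrib[OF assms one_carrier_mat])
  then show ?thesis using assms by (simp add: mtrace_def sum_distrib_left)
qed

subsection \<open>Positive semidefinite matrices\<close>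

lemma quadratic_form_supported:
  assumes A: "A \<in> carrier_mat n n" and x: "x \<in> carrier_vec n" and S: "S \<subseteq> {..<n}"
    and zero: "\<And>k. k < n \<Longrightarrow> k \<notin> S \<Longrightarrow> x $ k = 0"
  shows "(\<Sum>i<n. cnj (x $ i) * (A *\<^sub>v x) $ i) = (\<Sum>k\<in>S. \<Sum>l\<in>S. cnj (x $ k) * A $$ (k,l) * x $ l)"
proof -
  have "(\<Sum>i<n. cnj (x $ i) * (A *\<^sub>v x) $ i) = (\<Sum>i<n. \<Sum>l<n. cnj (x $ i) * A $$ (i,l) * x $ l)"
    by (simp add: index_mult_mat_vec_sum[OF A x] sum_distrib_left mult.assoc)
  also have "\<dots> = (\<Sum>i\<in>S. \<Sum>l<n. cnj (x $ i) * A $$ (i,l) * x $ l)"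
    using S zero by (intro sum.mono_neutral_right) auto
  also have "\<dots> = (\<Sum>i\<in>S. \<Sum>l\<in>S. cnj (x $ i) * A $$ (i,l) * x $ l)"
    using S zero by (intro sum.cong refl sum.mono_neutral_right) auto
  finally show ?thesis .
qed

lemma psd_mat_quadratic_form:
  assumes "psd_mat A" "A \<in> carrier_mat n n" "x \<in> carrier_vec n"
  defines "q \<equiv> \<Sum>k<n. cnj (x $ k) * (A *\<^sub>v x) $ k"
  shows "Im q = 0 \<and> 0 \<le> Re q"
  using assms unfolding psd_mat_def Let_def by auto

lemma psd_mat_diag:
  assumes "psd_mat A" "A \<in> carrier_mat n n" "i < n"
  shows "Im (A $$ (i,i)) = 0 \<and> 0 \<le> Re (A $$ (i,i))"
proof -
  let ?x = "unit_vec n i :: complex vec"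
  have "(\<Sum>k<n. cnj (?x $ k) * (A *\<^sub>v ?x) $ k) = A $$ (i,i)"
    using quadratic_form_supported[OF assms(2), of ?x "{i}"] assms(3) by simp
  then show ?thesis using psd_mat_quadratic_form[OF assms(1,2), of ?x] by simp
qed

lemma psd_mat_pair:
  fixes a b :: complex
  assumes "psd_mat A" "A \<in> carrier_mat n n" "i < n" "j < n" "i \<noteq> j"
  defines "q \<equiv> cnj a * A $$ (i,i) * a + cnj a * A $$ (i,j) * b
    + (cnj b * A $$ (j,i) * a + cnj b * A $$ (j,j) * b)"
  shows "Im q = 0 \<and> 0 \<le> Re q"
proof -
  let ?x = "vec n (\<lambda>k. if k = i then a else if k = j then b else 0) :: complex vec"
  have "(\<Sum>k<n. cnj (?x $ k) * (A *\<^sub>v ?x) $ k) = q"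
    using quadratic_form_supported[OF assms(2), of ?x "{i,j}"] assms(3-5) unfolding q_def by simp
  then show ?thesis using psd_mat_quadratic_form[OF assms(1,2), of ?x] by simp
qed

lemma psd_mat_cnj:
  assumes "psd_mat A" "A \<in> carrier_mat n n" "i < n" "j < n"
  shows "A $$ (j,i) = cnj (A $$ (i,j))"
proof (cases "i = j")
  case True
  then show ?thesis using psd_mat_diag[OF assms(1-3)] by (simp add: complex_eq_iff)
next
  case False
  have "Im (A $$ (i,i)) = 0" "Im (A $$ (j,j)) = 0"
    using psd_mat_diag[OF assms(1,2)] assms(3,4) by auto
  moreover note psd_mat_pair[OF assms False, of 1 1] psd_mat_pair[OF assms False, of 1 \<i>]
  ultimately show ?thesis by (simp add: complex_eq_iff)
qed

lemma quadratic_nonneg_imp_le: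
  fixes p r a :: real
  assumes nonneg: "\<And>t. 0 \<le> p - 2 * t * a + t\<^sup>2 * a * r" and "0 \<le> a" "0 \<le> r"
  shows "a \<le> p * r"
proof (cases "r = 0")
  case True
  show ?thesis
  proof (rule ccontr)
    assume "\<not> a \<le> p * r"
    with True have "0 < a" by simp
    have "0 \<le> p - 2 * ((p + 1) / (2 * a)) * a + ((p + 1) / (2 * a))\<^sup>2 * a * r" by (rule nonneg)
    also have "\<dots> = -1" using True \<open>0 < a\<close> by (simp add: field_simps)
    finally show False by simp
  qed
next
  case False
  with \<open>0 \<le> r\<close> have "0 < r" by simp
  have "0 \<le> p - 2 * (1 / r) * a + (1 / r)\<^sup>2 * a * r" by (rule nonneg)
  also have "\<dots> = (p * r - a) / r" using \<open>0 < r\<close> by (simp add: field_simps power2_eq_square)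
  finally show ?thesis using \<open>0 < r\<close> by (simp add: zero_le_divide_iff)
qed

lemma psd_mat_entry_bound:
  assumes "psd_mat A" "A \<in> carrier_mat n n" "i < n" "j < n"
  shows "(cmod (A $$ (i,j)))\<^sup>2 \<le> Re (A $$ (i,i)) * Re (A $$ (j,j))"
proof (cases "i = j")
  case True
  then show ?thesis using psd_mat_diag[OF assms(1-3)] by (simp add: cmod_def power2_eq_square)
next
  case False
  define c where "c = A $$ (i,j)"
  have diag: "A $$ (i,i) = of_real (Re (A $$ (i,i)))" "A $$ (j,j) = of_real (Re (A $$ (j,j)))"
    using psd_mat_diag[OF assms(1,2)] assms(3,4) by (auto simp: complex_eq_iff)
  have "0 \<le> Re (A $$ (i,i)) - 2 * t * (cmod c)\<^sup>2 + t\<^sup>2 * (cmod c)\<^sup>2 * Re (A $$ (j,j))" for t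
  proof -
    have "cmod c * cmod c = Re c * Re c + Im c * Im c"
      by (metis cmod_power2 power2_eq_square)
    then show ?thesis
      using psd_mat_pair[OF assms False, of 1 "- of_real t * cnj c"]
      unfolding psd_mat_cnj[OF assms] c_def[symmetric]
      by (subst (asm) (1 2) diag) (simp add: algebra_simps power2_eq_square)
  qed
  then show ?thesis unfolding c_def
    by (rule quadratic_nonneg_imp_le) (use psd_mat_diag[OF assms(1,2)] assms(4) in auto)
qed

subsection \<open>Kronecker products and weak density matrices\<close>

lemma div_mod_less_of_less_mult:
  assumes "i < m * (n::nat)"
  shows "i div n < m" "i mod n < n"
  using assms by (auto simp: less_mult_imp_div_less) (cases "n = 0"; simp)

lemma sum_lessThan_mult_div_mod:
  fixes f :: "nat \<Rightarrow> nat \<Rightarrow> 'a::comm_monoid_add"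
  shows "(\<Sum>i<m * n. f (i div n) (i mod n)) = (\<Sum>a<m. \<Sum>b<n. f a b)"
proof -
  have index_bound: "a * n + b < m * n" if "a < m" "b < n" for a b
  proof -
    have "a * n + b < (a + 1) * n" using that by simp
    also have "\<dots> \<le> m * n" using that by (intro mult_right_mono) auto
    finally show ?thesis .
  qed
  have "(\<Sum>i<m * n. f (i div n) (i mod n)) = (\<Sum>p\<in>{..<m} \<times> {..<n}. f (fst p) (snd p))"
    by (rule sum.reindex_bij_witness[where i = "\<lambda>p. fst p * n + snd p" and j = "\<lambda>i. (i div n, i mod n)"])
      (auto simp: div_mod_less_of_less_mult intro: index_bound)
  also have "\<dots> = (\<Sum>a<m. \<Sum>b<n. f a b)"
    by (simp add: sum.cartesian_product case_prod_beta)
  finally show ?thesis .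
qed

lemma kron_carrier:
  assumes "A \<in> carrier_mat m m'" "B \<in> carrier_mat n n'"
  shows "kron A B \<in> carrier_mat (m * n) (m' * n')"
  using assms by (simp add: kron_def)

lemma index_kron:
  assumes "A \<in> carrier_mat m m'" "B \<in> carrier_mat n n'" "i < m * n" "j < m' * n'"
  shows "kron A B $$ (i,j) = A $$ (i div n, j div n') * B $$ (i mod n, j mod n')"
  using assms by (simp add: kron_def)

lemma mtrace_kron:
  assumes A: "A \<in> carrier_mat m m" and B: "B \<in> carrier_mat n n"
  shows "mtrace (kron A B) = mtrace A * mtrace B"
proof -
  have "mtrace (kron A B) = (\<Sum>i<m * n. A $$ (i div n, i div n) * B $$ (i mod n, i mod n))"
    unfolding mtrace_def using kron_carrier[OF A B] by (simp add: index_kron[OF A B])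
  also have "\<dots> = (\<Sum>a<m. \<Sum>b<n. A $$ (a,a) * B $$ (b,b))" by (rule sum_lessThan_mult_div_mod)
  also have "\<dots> = mtrace A * mtrace B"
    using A B by (simp add: mtrace_def sum_product)
  finally show ?thesis .
qed

text \<open>The entrywise properties of a density matrix that survive Kronecker products.\<close>

definition weak_density :: "nat \<Rightarrow> complex mat \<Rightarrow> bool" where
  "weak_density n K \<longleftrightarrow> K \<in> carrier_mat n n \<and> mtrace K = 1
    \<and> (\<forall>i<n. Im (K $$ (i,i)) = 0 \<and> 0 \<le> Re (K $$ (i,i)))
    \<and> (\<forall>i<n. \<forall>j<n. (cmod (K $$ (i,j)))\<^sup>2 \<le> Re (K $$ (i,i)) * Re (K $$ (j,j)))"

lemma density_mats_imp_weak_density: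
  assumes "\<rho> \<in> density_mats n"
  shows "weak_density n \<rho>"
  using assms psd_mat_diag psd_mat_entry_bound
  unfolding density_mats_def weak_density_def by blast

lemma weak_density_kron:
  assumes A: "weak_density m A" and B: "weak_density n B"
  shows "weak_density (m * n) (kron A B)"
proof -
  have cA: "A \<in> carrier_mat m m" and cB: "B \<in> carrier_mat n n"
    using A B unfolding weak_density_def by auto
  let ?K = "kron A B"
  have diag: "Im (?K $$ (i,i)) = 0"
    "Re (?K $$ (i,i)) = Re (A $$ (i div n, i div n)) * Re (B $$ (i mod n, i mod n))"
    "0 \<le> Re (?K $$ (i,i))"
    if "i < m * n" for i
    using A B div_mod_less_of_less_mult[OF that] unfolding weak_density_def
    by (auto simp: index_kron[OF cA cB that that])
  have "(cmod (?K $$ (i,j)))\<^sup>2 \<le> Re (?K $$ (i,i)) * Re (?K $$ (j,j))"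
    if i: "i < m * n" and j: "j < m * n" for i j
  proof -
    have "(cmod (?K $$ (i,j)))\<^sup>2
        = (cmod (A $$ (i div n, j div n)))\<^sup>2 * (cmod (B $$ (i mod n, j mod n)))\<^sup>2"
      by (simp add: index_kron[OF cA cB i j] norm_mult power_mult_distrib)
    also have "\<dots> \<le> (Re (A $$ (i div n, i div n)) * Re (A $$ (j div n, j div n)))
        * (Re (B $$ (i mod n, i mod n)) * Re (B $$ (j mod n, j mod n)))"
      using A B div_mod_less_of_less_mult[OF i] div_mod_less_of_less_mult[OF j]
      unfolding weak_density_def by (intro mult_mono) auto
    also have "\<dots> = Re (?K $$ (i,i)) * Re (?K $$ (j,j))"
      by (simp add: diag(2)[OF i] diag(2)[OF j])
    finally show ?thesis .
  qed
  moreover have "mtrace ?K = 1"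
    using A B by (simp add: weak_density_def mtrace_kron[OF cA cB])
  ultimately show ?thesis
    using kron_carrier[OF cA cB] diag unfolding weak_density_def by auto
qed

lemma weak_density_entry_le:
  assumes "weak_density n K" "i < n" "j < n"
  shows "cmod (K $$ (i,j)) \<le> (Re (K $$ (i,i)) + Re (K $$ (j,j))) / 2"
proof -
  have "cmod (K $$ (i,j)) \<le> sqrt (Re (K $$ (i,i)) * Re (K $$ (j,j)))"
    using assms unfolding weak_density_def by (intro real_le_rsqrt) auto
  also have "\<dots> \<le> (Re (K $$ (i,i)) + Re (K $$ (j,j))) / 2"
    using assms unfolding weak_density_def by (intro arith_geo_mean_sqrt) auto
  finally show ?thesis .
qed

lemma weak_density_trace_bound:
  assumes K: "weak_density n K" and M: "M \<in> carrier_mat n n"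
    and rows: "\<And>i. i < n \<Longrightarrow> (\<Sum>j<n. cmod (M $$ (i,j))) \<le> c"
    and cols: "\<And>j. j < n \<Longrightarrow> (\<Sum>i<n. cmod (M $$ (i,j))) \<le> c"
  shows "\<bar>Re (mtrace (K * M))\<bar> \<le> c"
proof -
  define d where "d i = Re (K $$ (i,i))" for i
  have cK: "K \<in> carrier_mat n n" and d0: "\<And>i. i < n \<Longrightarrow> 0 \<le> d i"
    using K unfolding weak_density_def d_def by auto
  have dsum: "(\<Sum>i<n. d i) = 1"
    using K cK unfolding weak_density_def d_def mtrace_def by (auto simp flip: Re_sum)
  have "\<bar>Re (mtrace (K * M))\<bar> \<le> cmod (\<Sum>i<n. \<Sum>j<n. K $$ (i,j) * M $$ (j,i))"
    unfolding mtrace_mult[OF cK M] by (rule abs_Re_le_cmod)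
  also have "\<dots> \<le> (\<Sum>i<n. \<Sum>j<n. cmod (K $$ (i,j)) * cmod (M $$ (j,i)))"
    by (intro order.trans[OF norm_sum] sum_mono order.trans[OF norm_sum]) (simp add: norm_mult)
  also have "\<dots> \<le> (\<Sum>i<n. \<Sum>j<n. (d i + d j) / 2 * cmod (M $$ (j,i)))"
    unfolding d_def by (intro sum_mono mult_right_mono weak_density_entry_le[OF K]) auto
  also have "\<dots> = (\<Sum>i<n. d i * (\<Sum>j<n. cmod (M $$ (j,i)))) / 2
      + (\<Sum>j<n. d j * (\<Sum>i<n. cmod (M $$ (j,i)))) / 2"
  proof -
    have "(\<Sum>i<n. \<Sum>j<n. (d i + d j) / 2 * cmod (M $$ (j,i)))
        = (\<Sum>i<n. \<Sum>j<n. d i * cmod (M $$ (j,i))) / 2 + (\<Sum>i<n. \<Sum>j<n. d j * cmod (M $$ (j,i))) / 2"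
      by (simp add: sum_divide_distrib sum.distrib add_divide_distrib ring_distribs)
    also have "(\<Sum>i<n. \<Sum>j<n. d j * cmod (M $$ (j,i))) = (\<Sum>j<n. \<Sum>i<n. d j * cmod (M $$ (j,i)))"
      by (rule sum.swap)
    finally show ?thesis by (simp add: sum_distrib_left)
  qed
  also have "\<dots> \<le> (\<Sum>i<n. d i * c) / 2 + (\<Sum>j<n. d j * c) / 2"
    by (intro add_mono divide_right_mono sum_mono mult_left_mono) (auto intro: rows cols d0)
  also have "\<dots> = c" using dsum by (simp flip: sum_distrib_right)
  finally show ?thesis .
qed

subsection \<open>The induced 1-norm\<close>

lemma vec_norm1_smult: "vec_norm1 (c \<cdot>\<^sub>v x) = cmod c * vec_norm1 x"
  by (simp add: vec_norm1_def norm_mult sum_distrib_left)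

lemma vec_norm1_unit_vec:
  assumes "j < n"
  shows "vec_norm1 (unit_vec n j :: complex vec) = 1"
proof -
  have "vec_norm1 (unit_vec n j :: complex vec) = (\<Sum>i<n. if i = j then 1 else 0)"
    unfolding vec_norm1_def using assms by (intro sum.cong) auto
  then show ?thesis using assms by simp
qed

lemma vec_norm1_mult_mat_vec_le:
  assumes D: "D \<in> carrier_mat n n" and x: "x \<in> carrier_vec n" and "vec_norm1 x = 1"
  shows "vec_norm1 (D *\<^sub>v x) \<le> (\<Sum>i<n. \<Sum>j<n. cmod (D $$ (i,j)))"
proof -
  have x_entry: "cmod (x $ j) \<le> 1" if "j < n" for j
    using member_le_sum[of j "{..<n}" "\<lambda>k. cmod (x $ k)"] that x \<open>vec_norm1 x = 1\<close>
    unfolding vec_norm1_def by simp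
  have "vec_norm1 (D *\<^sub>v x) = (\<Sum>i<n. cmod (\<Sum>j<n. D $$ (i,j) * x $ j))"
    unfolding vec_norm1_def using D by (simp add: index_mult_mat_vec_sum[OF D x] del: index_mult_mat_vec)
  also have "\<dots> \<le> (\<Sum>i<n. \<Sum>j<n. cmod (D $$ (i,j)) * cmod (x $ j))"
    by (intro sum_mono order.trans[OF norm_sum]) (simp add: norm_mult)
  also have "\<dots> \<le> (\<Sum>i<n. \<Sum>j<n. cmod (D $$ (i,j)))"
    by (intro sum_mono) (auto intro: mult_left_le x_entry)
  finally show ?thesis .
qed

lemma col_sum_le_induced_norm1:
  assumes D: "D \<in> carrier_mat n n" and j: "j < n"
  shows "(\<Sum>i<n. cmod (D $$ (i,j))) \<le> induced_norm1 D"
proof -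
  let ?S = "{vec_norm1 (D *\<^sub>v x) | x. x \<in> carrier_vec (dim_col D) \<and> vec_norm1 x = 1}"
  have "bdd_above ?S"
  proof (rule bdd_aboveI)
    fix y assume "y \<in> ?S"
    then show "y \<le> (\<Sum>i<n. \<Sum>j<n. cmod (D $$ (i,j)))"
      using vec_norm1_mult_mat_vec_le[OF D] D by auto
  qed
  moreover have "vec_norm1 (D *\<^sub>v unit_vec n j) \<in> ?S"
    using D j vec_norm1_unit_vec[OF j] unit_vec_carrier by blast
  ultimately have "vec_norm1 (D *\<^sub>v unit_vec n j) \<le> induced_norm1 D"
    unfolding induced_norm1_def by (rule cSup_upper[rotated])
  moreover have "vec_norm1 (D *\<^sub>v unit_vec n j) = (\<Sum>i<n. cmod (D $$ (i,j)))"
    unfolding vec_norm1_def using D j by simp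
  ultimately show ?thesis by simp
qed

lemma induced_norm1_smult_one:
  assumes "n \<ge> 1"
  shows "induced_norm1 (c \<cdot>\<^sub>m 1\<^sub>m n) = cmod c"
proof -
  have norm_eq: "vec_norm1 ((c \<cdot>\<^sub>m 1\<^sub>m n) *\<^sub>v x) = cmod c * vec_norm1 x"
    if "x \<in> carrier_vec n" for x
  proof -
    have "(c \<cdot>\<^sub>m 1\<^sub>m n) *\<^sub>v x = c \<cdot>\<^sub>v x" using that by (intro eq_vecI) (auto simp: row_smult)
    then show ?thesis by (simp add: vec_norm1_smult)
  qed
  let ?S = "{vec_norm1 ((c \<cdot>\<^sub>m 1\<^sub>m n) *\<^sub>v x) | x. x \<in> carrier_vec n \<and> vec_norm1 x = 1}"
  have "?S = {cmod c}"
  proof (intro equalityI subsetI)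
    fix y assume "y \<in> ?S"
    then show "y \<in> {cmod c}" using norm_eq by auto
  next
    fix y assume "y \<in> {cmod c}"
    moreover have unit: "unit_vec n 0 \<in> carrier_vec n" "vec_norm1 (unit_vec n 0 :: complex vec) = 1"
      using assms vec_norm1_unit_vec by auto
    ultimately have "y = vec_norm1 ((c \<cdot>\<^sub>m 1\<^sub>m n) *\<^sub>v unit_vec n 0)" using norm_eq by simp
    with unit show "y \<in> ?S" by blast
  qed
  then show ?thesis unfolding induced_norm1_def by simp
qed

lemma hermitian_row_sum_eq_col_sum:
  assumes "hermitian_mat D" "D \<in> carrier_mat n n" "i < n"
  shows "(\<Sum>j<n. cmod (D $$ (i,j))) = (\<Sum>j<n. cmod (D $$ (j,i)))"
proof (rule sum.cong)
  fix j assume "j \<in> {..<n}"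
  then have "D $$ (i,j) = cnj (D $$ (j,i))"
    using assms unfolding hermitian_mat_def by (metis carrier_matD(1) lessThan_iff)
  then show "cmod (D $$ (i,j)) = cmod (D $$ (j,i))" by simp
qed simp

lemma payoff_le_of_deception_set:
  assumes A: "\<rho>A \<in> density_mats nA" and B: "\<rho>B \<in> density_mats nB"
    and D: "D \<in> deception_set (nA * nB) \<Delta>"
  shows "payoff \<rho>A \<rho>B D \<le> \<Delta>"
proof -
  have cD: "D \<in> carrier_mat (nA * nB) (nA * nB)" and "hermitian_mat D" "induced_norm1 D \<le> \<Delta>"
    using D unfolding deception_set_def by auto
  then have cols: "(\<Sum>i<nA * nB. cmod (D $$ (i,j))) \<le> \<Delta>" if "j < nA * nB" for j
    using col_sum_le_induced_norm1[OF cD that] by linarith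
  have "\<bar>payoff \<rho>A \<rho>B D\<bar> \<le> \<Delta>" unfolding payoff_def
  proof (rule weak_density_trace_bound[OF weak_density_kron cD _ cols])
    show "weak_density nA \<rho>A" "weak_density nB \<rho>B"
      using A B by (auto intro: density_mats_imp_weak_density)
    show "(\<Sum>j<nA * nB. cmod (D $$ (i,j))) \<le> \<Delta>" if "i < nA * nB" for i
      using hermitian_row_sum_eq_col_sum[OF \<open>hermitian_mat D\<close> cD that] cols[OF that] by simp
  qed
  then show ?thesis by simp
qed

lemma smult_one_mat_mem_deception_set:
  assumes "\<Delta> \<ge> 0" "n \<ge> 1"
  shows "of_real \<Delta> \<cdot>\<^sub>m 1\<^sub>m n \<in> deception_set n \<Delta>"
  using assms induced_norm1_smult_one[of n "of_real \<Delta>"]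
  unfolding deception_set_def hermitian_mat_def by auto

lemma payoff_smult_one_mat:
  assumes "\<rho>A \<in> density_mats nA" "\<rho>B \<in> density_mats nB"
  shows "payoff \<rho>A \<rho>B (of_real \<Delta> \<cdot>\<^sub>m 1\<^sub>m (nA * nB)) = \<Delta>"
  using weak_density_kron[OF assms[THEN density_mats_imp_weak_density]]
  by (simp add: payoff_def weak_density_def mtrace_mult_smult_one)

lemma payoff_diff:
  assumes "\<rho>A \<in> density_mats nA" "\<rho>B \<in> density_mats nB"
    and "H \<in> carrier_mat (nA * nB) (nA * nB)" "D \<in> carrier_mat (nA * nB) (nA * nB)"
  shows "payoff \<rho>A \<rho>B (H - D) = payoff \<rho>A \<rho>B H - payoff \<rho>A \<rho>B D"
  using assms kron_carrier[of \<rho>A nA nA \<rho>B nB nB]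
  by (simp add: payoff_def density_mats_def mtrace_mult_minus)

lemma abs_payoff_le:
  assumes A: "\<rho>A \<in> density_mats nA" and B: "\<rho>B \<in> density_mats nB"
    and H: "H \<in> carrier_mat (nA * nB) (nA * nB)"
  shows "\<bar>payoff \<rho>A \<rho>B H\<bar> \<le> (\<Sum>i<nA * nB. \<Sum>j<nA * nB. cmod (H $$ (i,j)))"
  unfolding payoff_def
proof (rule weak_density_trace_bound[OF weak_density_kron H])
  show "weak_density nA \<rho>A" "weak_density nB \<rho>B"
    using A B by (auto intro: density_mats_imp_weak_density)
  show "(\<Sum>j<nA * nB. cmod (H $$ (i,j))) \<le> (\<Sum>i<nA * nB. \<Sum>j<nA * nB. cmod (H $$ (i,j)))"
    if "i < nA * nB" for i
    using that
    by (intro member_le_sum[where f = "\<lambda>i. \<Sum>j<nA * nB. cmod (H $$ (i,j))"]) (auto intro: sum_nonneg)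
  show "(\<Sum>i<nA * nB. cmod (H $$ (i,j))) \<le> (\<Sum>i<nA * nB. \<Sum>j<nA * nB. cmod (H $$ (i,j)))"
    if "j < nA * nB" for j
    using that by (intro sum_mono member_le_sum[where f = "\<lambda>j'. cmod (H $$ (_,j'))"]) auto
qed

lemma maximally_mixed_mem_density_mats:
  assumes "n \<ge> 1"
  shows "(1 / of_nat n) \<cdot>\<^sub>m 1\<^sub>m n \<in> density_mats n"
proof -
  let ?\<rho> = "(1 / of_nat n) \<cdot>\<^sub>m 1\<^sub>m n :: complex mat"
  have "(\<Sum>i<n. cnj (x $ i) * (?\<rho> *\<^sub>v x) $ i) = of_real ((\<Sum>i<n. (cmod (x $ i))\<^sup>2) / n)"
    if "x \<in> carrier_vec n" for x
    using that by (simp add: index_mult_mat_vec_sum[of _ n n] sum.delta' if_distrib sum_divide_distrib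
        complex_norm_square mult.commute del: of_real_power cong: if_cong)
  then have "psd_mat ?\<rho>" unfolding psd_mat_def Let_def by (auto intro!: divide_nonneg_nonneg sum_nonneg)
  moreover have "mtrace ?\<rho> = 1" using assms by (simp add: mtrace_def)
  ultimately show ?thesis unfolding density_mats_def by simp
qed

lemma cInf_diff_attained_bound:
  fixes f :: "'a \<Rightarrow> real" and g :: "'a \<Rightarrow> 'b \<Rightarrow> real"
  assumes "A \<noteq> {}" and "bdd_below (f ` A)"
    and le: "\<And>x y. x \<in> A \<Longrightarrow> y \<in> B \<Longrightarrow> g x y \<le> c"
    and "y\<^sub>0 \<in> B" and attained: "\<And>x. x \<in> A \<Longrightarrow> g x y\<^sub>0 = c"
  shows "Inf {f x - g x y | x y. x \<in> A \<and> y \<in> B} = Inf (f ` A) - c"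
proof -
  let ?S = "{f x - g x y | x y. x \<in> A \<and> y \<in> B}"
  have lower: "Inf (f ` A) - c \<le> s" if "s \<in> ?S" for s
    using that le cInf_lower[OF _ \<open>bdd_below (f ` A)\<close>] by fastforce
  have mem: "f x - c \<in> ?S" if "x \<in> A" for x
    using that \<open>y\<^sub>0 \<in> B\<close> attained by force
  have "Inf ?S + c \<le> f x" if "x \<in> A" for x
    using cInf_lower[OF mem[OF that]] lower by (force intro: bdd_belowI)
  then have "Inf ?S + c \<le> Inf (f ` A)"
    using \<open>A \<noteq> {}\<close> by (intro cInf_greatest) auto
  moreover have "Inf (f ` A) - c \<le> Inf ?S"
    using \<open>A \<noteq> {}\<close> mem lower by (intro cInf_greatest) auto
  ultimately show ?thesis by linarith
qed

lemma robust_value_eq: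
  assumes "nA \<ge> 1" "nB \<ge> 1" "\<Delta> \<ge> 0"
    and H: "H \<in> carrier_mat (nA * nB) (nA * nB)" and \<sigma>: "\<sigma> \<in> density_mats nB"
  shows "robust_value nA nB \<Delta> H \<sigma> = naive_value nA H \<sigma> - \<Delta>"
proof -
  let ?D = "deception_set (nA * nB) \<Delta>"
  have "{payoff \<rho> \<sigma> (H - D) | \<rho> D. \<rho> \<in> density_mats nA \<and> D \<in> ?D}
      = {payoff \<rho> \<sigma> H - payoff \<rho> \<sigma> D | \<rho> D. \<rho> \<in> density_mats nA \<and> D \<in> ?D}"
    using payoff_diff[OF _ \<sigma> H] unfolding deception_set_def by (metis (no_types, lifting) mem_Collect_eq)
  also have "Inf \<dots> = Inf ((\<lambda>\<rho>. payoff \<rho> \<sigma> H) ` density_mats nA) - \<Delta>"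
  proof (rule cInf_diff_attained_bound)
    show "density_mats nA \<noteq> {}" using maximally_mixed_mem_density_mats \<open>nA \<ge> 1\<close> by blast
    show "bdd_below ((\<lambda>\<rho>. payoff \<rho> \<sigma> H) ` density_mats nA)"
    proof (rule bdd_belowI2)
      fix \<rho> assume "\<rho> \<in> density_mats nA"
      from abs_payoff_le[OF this \<sigma> H]
      show "- (\<Sum>i<nA * nB. \<Sum>j<nA * nB. cmod (H $$ (i,j))) \<le> payoff \<rho> \<sigma> H" by linarith
    qed
    show "of_real \<Delta> \<cdot>\<^sub>m 1\<^sub>m (nA * nB) \<in> ?D"
      using assms by (intro smult_one_mat_mem_deception_set) auto
  qed (use payoff_le_of_deception_set[OF _ \<sigma>] payoff_smult_one_mat[OF _ \<sigma>] in auto)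
  finally show ?thesis unfolding robust_value_def naive_value_def by (simp only: Setcompr_eq_image)
qed

theorem theorem1:
  fixes nA nB :: nat and \<Delta> :: real and H :: "complex mat"
  assumes "nA \<ge> 1" and "nB \<ge> 1" and "\<Delta> \<ge> 0"
    and "H \<in> carrier_mat (nA * nB) (nA * nB)" and "hermitian_mat H"
  shows "Phi nA nB H = Phi_r nA nB \<Delta> H"
  using robust_value_eq[OF assms(1-4)] unfolding Phi_def Phi_r_def by auto

end
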